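(* The generating function $$G_{(132,321)}(x,p,q,y,z)=\sum_{n\ge 0}\ \sum_{\pi\in S_n(132,321)} x^n p^{\operatorname{asc}(\pi)} q^{\operatorname{des}(\pi)} y^{\operatorname{MNA}(\pi)} z^{\operatorname{MND}(\pi)}$$ is equal to $\dfrac{A}{(1-p^2x^2y)^3}$, where $$A=1 + x + p x^2 y - 3 p^2 x^2 y - 2 p^2 x^3 y - 2 p^3 x^4 y^2 + 3 p^4 x^4 y^2 + p^4 x^5 y^2 + p^5 x^6 y^3 - p^6 x^6 y^3 + q x^2 z + 3 p q x^3 y z + p^2 q x^4 y z + 2 p^2 q x^4 y^2 z + p^3 q x^5 y^2 z.$$
   Context: For $n\ge 0$, $S_n$ denotes the set of permutations $\pi=\pi_1\pi_2\cdots\pi_n$ of $[n]=\{1,\dots,n\}$ ($S_0$ consists of the empty permutation, for which all statistics below are $0$). A permutation $\pi\in S_n$ avoids a pattern $\tau\in S_k$ if there are no indices $i_1<\dots<i_k$ such that $\pi_{i_a}<\pi_{i_b}$ if and only if $\tau_a<\tau_b$; $S_n(\tau,\rho)$ is the set of permutations in $S_n$ avoiding both $\tau$ and $\rho$. $\operatorname{asc}(\pi)$ (resp. $\operatorname{des}(\pi)$) is the number of $i\in[n-1]$ with $\pi_i<\pi_{i+1}$ (resp. $\pi_i>\pi_{i+1}$). $\operatorname{MNA}(\pi)$ is the maximum size of a set $I\subseteq[n-1]$ such that $\pi_i<\pi_{i+1}$ for all $i\in I$ and $|i-j|\ge 2$ for distinct $i,j\in I$; $\operatorname{MND}(\pi)$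 is defined analogously with $\pi_i>\pi_{i+1}$. *)

theory Defs
  imports "HOL-Computational_Algebra.Formal_Power_Series"
begin

text \<open>Permutations of [n] as lists (one-line notation, 0-indexed positions).\<close>
definition perms :: "nat \<Rightarrow> nat list set" where
  "perms n = {\<pi>. distinct \<pi> \<and> set \<pi> = {1..n}}"

definition contains :: "nat list \<Rightarrow> nat list \<Rightarrow> bool" where
  "contains \<pi> \<tau> \<longleftrightarrow> (\<exists>idx :: nat \<Rightarrow> nat.
      strict_mono_on {..<length \<tau>} idx \<and> (\<forall>a<length \<tau>. idx a < length \<pi>) \<and>
      (\<forall>a<length \<tau>. \<forall>b<length \<tau>. (\<pi> ! idx a < \<pi> ! idx b \<longleftrightarrow> \<tau> ! a < \<tau> ! b)))"

definition avoids :: "nat list \<Rightarrow> nat list \<Rightarrow> bool" where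
  "avoids \<pi> \<tau> \<longleftrightarrow> \<not> contains \<pi> \<tau>"

definition perms_avoiding2 :: "nat \<Rightarrow> nat list \<Rightarrow> nat list \<Rightarrow> nat list set" where
  "perms_avoiding2 n \<tau> \<rho> = {\<pi> \<in> perms n. avoids \<pi> \<tau> \<and> avoids \<pi> \<rho>}"

definition asc_set :: "nat list \<Rightarrow> nat set" where
  "asc_set \<pi> = {i. i + 1 < length \<pi> \<and> \<pi> ! i < \<pi> ! (i + 1)}"

definition des_set :: "nat list \<Rightarrow> nat set" where
  "des_set \<pi> = {i. i + 1 < length \<pi> \<and> \<pi> ! i > \<pi> ! (i + 1)}"

definition asc :: "nat list \<Rightarrow> nat" where "asc \<pi> = card (asc_set \<pi>)"
definition des :: "nat list \<Rightarrow> nat" where "des \<pi> = card (des_set \<pi>)"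

definition separated :: "nat set \<Rightarrow> bool" where
  "separated I \<longleftrightarrow> (\<forall>i\<in>I. \<forall>j\<in>I. i \<noteq> j \<longrightarrow> i + 2 \<le> j \<or> j + 2 \<le> i)"

definition MNA :: "nat list \<Rightarrow> nat" where
  "MNA \<pi> = Max {card I | I. I \<subseteq> asc_set \<pi> \<and> separated I}"

definition MND :: "nat list \<Rightarrow> nat" where
  "MND \<pi> = Max {card I | I. I \<subseteq> des_set \<pi> \<and> separated I}"

text \<open>Generating function, as a formal power series in x whose coefficients are
  evaluated at arbitrary real values of p, q, y, z.\<close>
definition G :: "nat list \<Rightarrow> nat list \<Rightarrow> real \<Rightarrow> real \<Rightarrow> real \<Rightarrow> real \<Rightarrow> real fps" where
  "G \<tau> \<rho> p q y z = Abs_fps (\<lambda>n. \<Sum>\<pi>\<in>perms_avoiding2 n \<tau> \<rho>.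
      p ^ asc \<pi> * q ^ des \<pi> * y ^ MNA \<pi> * z ^ MND \<pi>)"

end

theory Submission
  imports Defs
begin

text \<open>A permutation avoiding 132 and 321 has at most one descent, and if it has one it is
  (a+1)...(a+b) 1...a (a+b+1)...n with a, b \<ge> 1. The identity has weight
  p^(n-1) y^(n div 2); the permutation with blocks a, b has its ascents in the two runs
  {0..b-2} and {b..n-2}, hence weight p^(n-2) q z y^(b div 2 + (n-b) div 2), and there are n-b
  choices of a. On each residue class n = 2j+2 and n = 2j+3 the resulting coefficient is
  (p^2 y)^j times a quadratic polynomial in j, so multiplying the series by (1 - p^2 y x^2)^3
  kills every coefficient from x^8 on; the surviving initial part is the numerator A.\<close>

section \<open>Patterns of length three\<close>

lemma all_less_3_nat: "(\<forall>t<3. P t) \<longleftrightarrow> P (0::nat) \<and> P 1 \<and> P 2"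
  by (simp add: numeral_3_eq_3 numeral_2_eq_2 All_less_Suc conj_commute conj_left_commute)

lemma strict_mono_on_lessThan_3:
  "strict_mono_on {..<3} (idx :: nat \<Rightarrow> 'a::order) \<longleftrightarrow> idx 0 < idx 1 \<and> idx 1 < idx 2"
proof -
  have "strict_mono_on {..<3} idx \<longleftrightarrow> (\<forall>s<3. \<forall>t<3. s < t \<longrightarrow> idx s < idx t)"
    unfolding strict_mono_on_def by auto
  then show ?thesis
    unfolding all_less_3_nat by auto
qed

lemma contains_length3:
  "contains \<pi> [a, b, c] \<longleftrightarrow> (\<exists>i j k. i < j \<and> j < k \<and> k < length \<pi> \<and>
     (\<pi>!i < \<pi>!j \<longleftrightarrow> a < b) \<and> (\<pi>!i < \<pi>!k \<longleftrightarrow> a < c) \<and>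
     (\<pi>!j < \<pi>!i \<longleftrightarrow> b < a) \<and> (\<pi>!j < \<pi>!k \<longleftrightarrow> b < c) \<and>
     (\<pi>!k < \<pi>!i \<longleftrightarrow> c < a) \<and> (\<pi>!k < \<pi>!j \<longleftrightarrow> c < b))" (is "_ \<longleftrightarrow> ?rhs")
proof -
  have length3: "length [a, b, c] = 3" by simp
  have "contains \<pi> [a, b, c] \<longleftrightarrow> (\<exists>idx :: nat \<Rightarrow> nat. idx 0 < idx 1 \<and> idx 1 < idx 2 \<and>
      idx 0 < length \<pi> \<and> idx 1 < length \<pi> \<and> idx 2 < length \<pi> \<and>
     (\<pi>!idx 0 < \<pi>!idx 1 \<longleftrightarrow> a < b) \<and> (\<pi>!idx 0 < \<pi>!idx 2 \<longleftrightarrow> a < c) \<and>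
     (\<pi>!idx 1 < \<pi>!idx 0 \<longleftrightarrow> b < a) \<and> (\<pi>!idx 1 < \<pi>!idx 2 \<longleftrightarrow> b < c) \<and>
     (\<pi>!idx 2 < \<pi>!idx 0 \<longleftrightarrow> c < a) \<and> (\<pi>!idx 2 < \<pi>!idx 1 \<longleftrightarrow> c < b))" (is "_ \<longleftrightarrow> ?mid")
    unfolding contains_def length3 strict_mono_on_lessThan_3 all_less_3_nat by simp
  also have "\<dots> \<longleftrightarrow> ?rhs"
  proof
    assume ?mid
    then show ?rhs by blast
  next
    assume ?rhs
    then obtain i j k where "i < j \<and> j < k \<and> k < length \<pi> \<and>
     (\<pi>!i < \<pi>!j \<longleftrightarrow> a < b) \<and> (\<pi>!i < \<pi>!k \<longleftrightarrow> a < c) \<and>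
     (\<pi>!j < \<pi>!i \<longleftrightarrow> b < a) \<and> (\<pi>!j < \<pi>!k \<longleftrightarrow> b < c) \<and>
     (\<pi>!k < \<pi>!i \<longleftrightarrow> c < a) \<and> (\<pi>!k < \<pi>!j \<longleftrightarrow> c < b)" by blast
    then show ?mid
      by (intro exI[of _ "\<lambda>t. [i, j, k] ! t"]) simp
  qed
  finally show ?thesis .
qed

lemma contains_132:
  "contains \<pi> [1,3,2] \<longleftrightarrow> (\<exists>i j k. i < j \<and> j < k \<and> k < length \<pi> \<and> \<pi>!i < \<pi>!k \<and> \<pi>!k < \<pi>!j)"
proof -
  have "x < y \<and> x < z \<and> \<not> y < x \<and> \<not> y < z \<and> \<not> z < x \<and> z < y \<longleftrightarrow> x < z \<and> z < y"
    for x y z :: nat by auto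
  then show ?thesis
    unfolding contains_length3 by simp
qed

lemma contains_321:
  "contains \<pi> [3,2,1] \<longleftrightarrow> (\<exists>i j k. i < j \<and> j < k \<and> k < length \<pi> \<and> \<pi>!k < \<pi>!j \<and> \<pi>!j < \<pi>!i)"
proof -
  have "\<not> x < y \<and> \<not> x < z \<and> y < x \<and> \<not> y < z \<and> z < x \<and> z < y \<longleftrightarrow> z < y \<and> y < x"
    for x y z :: nat by auto
  then show ?thesis
    unfolding contains_length3 by simp
qed

section \<open>The permutations avoiding 132 and 321\<close>

definition block_swap :: "nat \<Rightarrow> nat \<Rightarrow> nat \<Rightarrow> nat list" where
  "block_swap a b n = [a+1..<a+b+1] @ [1..<a+1] @ [a+b+1..<n+1]"

lemma length_block_swap: "a + b \<le> n \<Longrightarrow> length (block_swap a b n) = n"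
  unfolding block_swap_def by (simp del: upt_Suc)

lemma nth_block_swap:
  assumes "a + b \<le> n" "i < n"
  shows "block_swap a b n ! i = (if i < b then a + 1 + i else if i < a + b then i - b + 1 else i + 1)"
proof -
  consider "i < b" | "b \<le> i" "i < a + b" | "a + b \<le> i" by linarith
  then show ?thesis
    using assms unfolding block_swap_def by cases (auto simp: nth_append)
qed

lemma block_swap_in_perms: "a + b \<le> n \<Longrightarrow> block_swap a b n \<in> perms n"
  unfolding block_swap_def perms_def by auto

lemma block_swap_avoids:
  assumes "a + b \<le> n"
  shows "avoids (block_swap a b n) [1,3,2]" "avoids (block_swap a b n) [3,2,1]"
  using assms unfolding avoids_def contains_132 contains_321
  by (auto simp: length_block_swap nth_block_swap split: if_splits)

lemma des_set_take: "des_set (take m xs) = {i \<in> des_set xs. i + 1 < m}"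
  unfolding des_set_def by auto

lemma des_set_drop: "des_set (drop m xs) = {i. m + i \<in> des_set xs}"
  unfolding des_set_def by auto

lemma sorted_wrt_less_iff_des_set_empty:
  assumes "distinct xs"
  shows "sorted_wrt (<) xs \<longleftrightarrow> des_set xs = {}"
proof -
  have "xs ! i \<noteq> xs ! Suc i" if "Suc i < length xs" for i
    using assms that by (simp add: nth_eq_iff_index_eq)
  then show ?thesis
    unfolding sorted_wrt_iff_nth_Suc_transp[OF transp_on_less] des_set_def
    by (auto simp: linorder_neq_iff)
qed

lemma perm_eq_upt_if_sorted:
  assumes "xs \<in> perms n" "sorted_wrt (<) xs"
  shows "xs = [1..<n+1]"
proof (rule strict_sorted_equal)
  show "set xs = set [1..<n+1]"
    using assms(1) unfolding perms_def by (simp add: atLeastLessThanSuc_atLeastAtMost del: upt_Suc)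
qed (simp_all add: assms(2) del: upt_Suc)

lemma des_set_subsingleton_if_avoids:
  assumes "distinct \<pi>" "avoids \<pi> [1,3,2]" "avoids \<pi> [3,2,1]"
    and "i \<in> des_set \<pi>" "j \<in> des_set \<pi>"
  shows "i = j"
proof -
  have no132: False
    if "i < j" "j < k" "k < length \<pi>" "\<pi>!i < \<pi>!k" "\<pi>!k < \<pi>!j" for i j k
    using assms(2) that unfolding avoids_def contains_132 by blast
  have no321: False
    if "i < j" "j < k" "k < length \<pi>" "\<pi>!k < \<pi>!j" "\<pi>!j < \<pi>!i" for i j k
    using assms(3) that unfolding avoids_def contains_321 by blast
  have less_or_greater: "\<pi>!i < \<pi>!j \<or> \<pi>!j < \<pi>!i"
    if "i < j" "j < length \<pi>" for i j
    using assms(1) that by (metis less_trans linorder_neqE_nat nat_neq_iff nth_eq_iff_index_eq)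
  \<comment> \<open>For descents i < j: first \<pi>!i < \<pi>!j (no 321), then \<pi>!(j+1) < \<pi>!i (no 132),
    and then \<pi>!(i+1), \<pi>!(j+1) can be compared neither way.\<close>
  have two_descents: False if "i < j" "i \<in> des_set \<pi>" "j \<in> des_set \<pi>" for i j
  proof -
    have des: "j + 1 < length \<pi>" "\<pi>!(i+1) < \<pi>!i" "\<pi>!(j+1) < \<pi>!j"
      using that unfolding des_set_def by auto
    have ij: "\<pi>!i < \<pi>!j"
      using less_or_greater[of i j] no321[of i j "j+1"] that(1) des by force
    then have "i + 1 \<noteq> j"
      using des(2) by auto
    then have "i + 1 < j"
      using that(1) by simp
    have "\<pi>!(j+1) < \<pi>!i"
      using less_or_greater[of i "j+1"] no132[of i j "j+1"] that(1) des ij by force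
    then show False
      using less_or_greater[of "i+1" "j+1"] no321[of i "i+1" "j+1"] no132[of "i+1" j "j+1"]
        \<open>i + 1 < j\<close> des by force
  qed
  show "i = j"
    using two_descents[of i j] two_descents[of j i] assms(4,5) by (metis linorder_neqE_nat)
qed

lemma sorted_set_subset_hd_last:
  fixes xs :: "'a::linorder list"
  assumes "sorted xs" "xs \<noteq> []"
  shows "set xs \<subseteq> {hd xs..last xs}"
proof
  fix v assume "v \<in> set xs"
  then obtain k where k: "k < length xs" "v = xs ! k"
    by (auto simp: in_set_conv_nth)
  then have "xs ! 0 \<le> xs ! k" "xs ! k \<le> xs ! (length xs - 1)"
    using assms(1) by (simp_all add: sorted_nth_mono)
  then show "v \<in> {hd xs..last xs}"
    using k assms(2) by (simp add: hd_conv_nth last_conv_nth)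
qed

lemma avoids_132_append:
  assumes "avoids (P @ Q) [1,3,2]" "P \<noteq> []" "v \<in> set Q"
  shows "\<not> (hd P < v \<and> v < last P)"
proof
  assume between: "hd P < v \<and> v < last P"
  then have "0 < length P - 1"
    using assms(2) by (cases P) auto
  moreover obtain k where "k < length Q" "Q ! k = v"
    using assms(3) by (meson in_set_conv_nth)
  moreover have "(P @ Q) ! 0 = hd P" "(P @ Q) ! (length P - 1) = last P"
    using assms(2) by (simp_all add: hd_conv_nth last_conv_nth nth_append)
  ultimately have "contains (P @ Q) [1,3,2]"
    using between unfolding contains_132
    by (intro exI[of _ 0] exI[of _ "length P - 1"] exI[of _ "length P + k"])
      (simp add: nth_append_length_plus)
  with assms(1) show False
    unfolding avoids_def by simp
qed

lemma first_run_eq_interval: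
  assumes perm: "P @ Q \<in> perms n" and sorted: "sorted_wrt (<) P" and nonempty: "P \<noteq> []"
    and gap: "\<And>v. v \<in> set Q \<Longrightarrow> \<not> (hd P < v \<and> v < last P)"
  shows "set P = {hd P..last P}"
proof
  show "set P \<subseteq> {hd P..last P}"
    using sorted_set_subset_hd_last[OF strict_sorted_imp_sorted[OF sorted] nonempty] .
next
  have dist: "distinct (P @ Q)" and set_PQ: "set P \<union> set Q = {1..n}"
    using perm unfolding perms_def by auto
  have ends: "hd P \<in> set P" "last P \<in> set P"
    using nonempty by simp_all
  show "{hd P..last P} \<subseteq> set P"
  proof
    fix v assume v: "v \<in> {hd P..last P}"
    have "hd P \<in> {1..n}" "last P \<in> {1..n}"
      using ends set_PQ by blast+
    with v have "v \<in> set P \<union> set Q"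
      unfolding set_PQ by auto
    moreover have "v \<notin> set Q"
    proof
      assume "v \<in> set Q"
      with gap v have "v = hd P \<or> v = last P"
        by fastforce
      with \<open>v \<in> set Q\<close> ends dist show False
        by auto
    qed
    ultimately show "v \<in> set P" by blast
  qed
qed

lemma two_runs_eq_block_swap:
  assumes perm: "P @ Q \<in> perms n" and sorted: "sorted_wrt (<) P" "sorted_wrt (<) Q"
    and nonempty: "P \<noteq> []" "Q \<noteq> []" and descent: "hd Q < last P"
    and gap: "\<And>v. v \<in> set Q \<Longrightarrow> \<not> (hd P < v \<and> v < last P)"
  obtains a b where "1 \<le> a" "1 \<le> b" "a + b \<le> n" "P @ Q = block_swap a b n"
proof -
  define m M where "m = hd P" and "M = last P"
  have dist: "distinct (P @ Q)" and set_PQ: "set P \<union> set Q = {1..n}"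
    using perm unfolding perms_def by auto
  have set_P: "set P = {m..M}"
    using first_run_eq_interval[OF perm sorted(1) nonempty(1) gap] unfolding m_def M_def .
  then have P_eq: "P = [m..<M+1]"
    using sorted(1) by (intro strict_sorted_equal)
      (simp_all add: atLeastLessThanSuc_atLeastAtMost del: upt_Suc)
  have "M \<in> set P"
    using nonempty(1) unfolding M_def by simp
  then have m_M: "m \<le> M" "M \<le> n"
    using set_P set_PQ by auto
  have hd_Q: "hd Q \<in> set Q" "hd Q \<notin> set P" "1 \<le> hd Q"
    using nonempty(2) set_PQ dist by auto
  then have "hd Q \<noteq> m"
    using nonempty(1) unfolding m_def by auto
  then have "hd Q < m"
    using gap[OF hd_Q(1)] descent unfolding m_def M_def by auto
  then have m_ge_2: "2 \<le> m"
    using hd_Q(3) by simp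
  have "set Q = {1..n} - {m..M}"
    using dist set_PQ set_P by auto
  also have "\<dots> = set ([1..<m] @ [M+1..<n+1])"
    using m_ge_2 m_M by (simp del: upt_Suc) fastforce
  finally have Q_eq: "Q = [1..<m] @ [M+1..<n+1]"
    using sorted(2) m_M by (intro strict_sorted_equal)
      (auto simp: sorted_wrt_append simp del: upt_Suc)
  have "P @ Q = block_swap (m - 1) (M + 1 - m) n"
    unfolding block_swap_def P_eq Q_eq using m_ge_2 m_M by simp
  with m_ge_2 m_M show ?thesis
    using that[of "m - 1" "M + 1 - m"] by simp
qed

lemma avoider_132_321_cases:
  assumes perm: "\<pi> \<in> perms n" and av: "avoids \<pi> [1,3,2]" "avoids \<pi> [3,2,1]"
  obtains "\<pi> = block_swap 0 0 n"
    | a b where "1 \<le> a" "1 \<le> b" "a + b \<le> n" "\<pi> = block_swap a b n"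
proof -
  have dist: "distinct \<pi>"
    using perm unfolding perms_def by simp
  show ?thesis
  proof (cases "des_set \<pi> = {}")
    case True
    with dist have "sorted_wrt (<) \<pi>"
      by (simp add: sorted_wrt_less_iff_des_set_empty)
    with perm have "\<pi> = [1..<n+1]"
      by (rule perm_eq_upt_if_sorted)
    then show ?thesis
      using that(1) by (simp add: block_swap_def)
  next
    case False
    then obtain d where d: "d \<in> des_set \<pi>" by blast
    have unique: "i = d" if "i \<in> des_set \<pi>" for i
      using des_set_subsingleton_if_avoids[OF dist av that d] .
    define P Q where "P = take (d+1) \<pi>" and "Q = drop (d+1) \<pi>"
    have split: "\<pi> = P @ Q"
      unfolding P_def Q_def by simp
    have len: "d + 1 < length \<pi>" and descent: "\<pi> ! (d+1) < \<pi> ! d"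
      using d unfolding des_set_def by auto
    have "des_set P = {}" "des_set Q = {}"
      using unique unfolding P_def Q_def des_set_take des_set_drop by fastforce+
    moreover have "distinct P" "distinct Q"
      using dist unfolding P_def Q_def by simp_all
    ultimately have sorted: "sorted_wrt (<) P" "sorted_wrt (<) Q"
      by (simp_all add: sorted_wrt_less_iff_des_set_empty)
    have nonempty: "P \<noteq> []" "Q \<noteq> []"
      using len unfolding P_def Q_def by auto
    have "hd Q < last P"
      using len descent unfolding P_def Q_def by (simp add: hd_drop_conv_nth take_Suc_conv_app_nth)
    from two_runs_eq_block_swap[OF perm[unfolded split] sorted nonempty this
        avoids_132_append[OF av(1)[unfolded split] nonempty(1)]]
    show ?thesis
      using that(2) split by metis
  qed
qed

section \<open>Maximal separated sets\<close>

definition max_separated :: "nat set \<Rightarrow> nat" where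
  "max_separated S = Max {card I | I. I \<subseteq> S \<and> separated I}"

lemma MNA_eq_max_separated: "MNA \<pi> = max_separated (asc_set \<pi>)"
  unfolding MNA_def max_separated_def ..

lemma MND_eq_max_separated: "MND \<pi> = max_separated (des_set \<pi>)"
  unfolding MND_def max_separated_def ..

lemma finite_separated_cards:
  "finite S \<Longrightarrow> finite {card I | I. I \<subseteq> S \<and> separated I}"
  by (rule finite_subset[of _ "card ` Pow S"]) auto

lemma card_le_max_separated:
  "finite S \<Longrightarrow> I \<subseteq> S \<Longrightarrow> separated I \<Longrightarrow> card I \<le> max_separated S"
  unfolding max_separated_def by (rule Max_ge[OF finite_separated_cards]) auto

lemma max_separated_attained:
  assumes "finite S"
  obtains I where "I \<subseteq> S" "separated I" "card I = max_separated S"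
proof -
  have "separated {}"
    unfolding separated_def by simp
  then have "max_separated S \<in> {card I | I. I \<subseteq> S \<and> separated I}"
    unfolding max_separated_def by (intro Max_in finite_separated_cards assms) auto
  then obtain I where "I \<subseteq> S" "separated I" "max_separated S = card I"
    by auto
  then show ?thesis
    using that by simp
qed

lemma card_separated_le:
  assumes "separated I" "I \<subseteq> {lo..<hi}"
  shows "card I \<le> (hi - lo + 1) div 2"
proof -
  have "inj_on (\<lambda>i. (i - lo) div 2) I"
  proof (rule inj_onI)
    fix i j assume "i \<in> I" "j \<in> I" "(i - lo) div 2 = (j - lo) div 2"
    moreover have "lo \<le> i" "lo \<le> j" using assms(2) calculation by auto
    ultimately show "i = j"
      using assms(1) unfolding separated_def by fastforce
  qed
  moreover have "(\<lambda>i. (i - lo) div 2) ` I \<subseteq> {..<(hi - lo + 1) div 2}"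
    using assms(2) by fastforce
  ultimately show ?thesis
    by (metis card_image card_lessThan card_mono finite_lessThan)
qed

lemma max_separated_atLeastLessThan: "max_separated {lo..<hi} = (hi - lo + 1) div 2"
proof (rule antisym)
  obtain I where "I \<subseteq> {lo..<hi}" "separated I" "card I = max_separated {lo..<hi}"
    by (rule max_separated_attained[OF finite_atLeastLessThan])
  then show "max_separated {lo..<hi} \<le> (hi - lo + 1) div 2"
    using card_separated_le by metis
next
  define W where "W = (\<lambda>i. lo + 2 * i) ` {..<(hi - lo + 1) div 2}"
  have "W \<subseteq> {lo..<hi}" "separated W"
    unfolding W_def separated_def by auto
  moreover have "card W = (hi - lo + 1) div 2"
    unfolding W_def by (subst card_image) (auto simp: inj_on_def)
  ultimately show "(hi - lo + 1) div 2 \<le> max_separated {lo..<hi}"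
    using card_le_max_separated by (metis finite_atLeastLessThan)
qed

lemma max_separated_empty: "max_separated {} = 0"
  using max_separated_atLeastLessThan[of 0 0] by simp

lemma max_separated_singleton: "max_separated {k} = 1"
  using max_separated_atLeastLessThan[of k "k + 1"] by simp

lemma max_separated_Un:
  assumes "finite S" "finite T" and gap: "\<And>s t. s \<in> S \<Longrightarrow> t \<in> T \<Longrightarrow> s + 2 \<le> t"
  shows "max_separated (S \<union> T) = max_separated S + max_separated T"
proof (rule antisym)
  obtain I where I: "I \<subseteq> S \<union> T" "separated I" "card I = max_separated (S \<union> T)"
    by (rule max_separated_attained[OF finite_UnI[OF assms(1,2)]])
  have "card I \<le> card (I \<inter> S) + card (I \<inter> T)"
    using I(1) by (metis card_Un_le Int_Un_distrib Int_absorb2)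
  also have "\<dots> \<le> max_separated S + max_separated T"
    using I(2) assms by (intro add_mono card_le_max_separated) (auto simp: separated_def)
  finally show "max_separated (S \<union> T) \<le> max_separated S + max_separated T"
    using I(3) by simp
next
  obtain J where J: "J \<subseteq> S" "separated J" "card J = max_separated S"
    by (rule max_separated_attained[OF assms(1)])
  obtain K where K: "K \<subseteq> T" "separated K" "card K = max_separated T"
    by (rule max_separated_attained[OF assms(2)])
  have "separated (J \<union> K)"
    unfolding separated_def
  proof (intro ballI impI)
    fix i j assume "i \<in> J \<union> K" "j \<in> J \<union> K" "i \<noteq> j"
    then show "i + 2 \<le> j \<or> j + 2 \<le> i"
      using J(1,2) K(1,2) gap[of i j] gap[of j i] unfolding separated_def by blast
  qed
  moreover have "J \<inter> K = {}"
    using J(1) K(1) gap by (metis disjoint_iff less_add_same_cancel1 not_le subsetD zero_less_numeral)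
  then have "card (J \<union> K) = card J + card K"
    using J(1) K(1) assms(1,2) by (intro card_Un_disjoint) (auto intro: finite_subset)
  moreover have "J \<union> K \<subseteq> S \<union> T"
    using J(1) K(1) by blast
  ultimately show "max_separated S + max_separated T \<le> max_separated (S \<union> T)"
    using J(3) K(3) card_le_max_separated[of "S \<union> T" "J \<union> K"] assms(1,2) by simp
qed

section \<open>Statistics and coefficients\<close>

lemma block_swap_ascent_iff:
  assumes "1 \<le> a" "1 \<le> b" "a + b \<le> n" "i + 1 < n"
  shows "block_swap a b n ! i < block_swap a b n ! (i + 1) \<longleftrightarrow> i \<noteq> b - 1"
  using assms by (auto simp: nth_block_swap)

lemma block_swap_descent_iff:
  assumes "1 \<le> a" "1 \<le> b" "a + b \<le> n" "i + 1 < n"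
  shows "block_swap a b n ! i > block_swap a b n ! (i + 1) \<longleftrightarrow> i = b - 1"
  using assms by (auto simp: nth_block_swap)

lemma asc_set_block_swap:
  assumes "1 \<le> a" "1 \<le> b" "a + b \<le> n"
  shows "asc_set (block_swap a b n) = {0..<b-1} \<union> {b..<n-1}"
  using assms block_swap_ascent_iff[OF assms]
  unfolding asc_set_def by (auto simp: length_block_swap)

lemma des_set_block_swap:
  assumes "1 \<le> a" "1 \<le> b" "a + b \<le> n"
  shows "des_set (block_swap a b n) = {b-1}"
proof -
  have "b - 1 \<in> des_set (block_swap a b n)"
    using block_swap_descent_iff[OF assms, of "b - 1"] assms
    unfolding des_set_def by (simp add: length_block_swap)
  moreover have "i = b - 1" if "i \<in> des_set (block_swap a b n)" for i
    using that block_swap_descent_iff[OF assms, of i]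
    unfolding des_set_def by (simp add: length_block_swap assms(3))
  ultimately show ?thesis by blast
qed

lemma asc_set_identity: "asc_set (block_swap 0 0 n) = {0..<n-1}"
  unfolding asc_set_def by (auto simp: length_block_swap nth_block_swap)

lemma des_set_identity: "des_set (block_swap 0 0 n) = {}"
  unfolding des_set_def by (auto simp: length_block_swap nth_block_swap)

definition stat_weight :: "'a::comm_semiring_1 \<Rightarrow> 'a \<Rightarrow> 'a \<Rightarrow> 'a \<Rightarrow> nat list \<Rightarrow> 'a" where
  "stat_weight p q y z \<pi> = p ^ asc \<pi> * q ^ des \<pi> * y ^ MNA \<pi> * z ^ MND \<pi>"

lemma stat_weight_identity: "stat_weight p q y z (block_swap 0 0 n) = p ^ (n - 1) * y ^ (n div 2)"
proof -
  have "MNA (block_swap 0 0 n) = n div 2"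
    unfolding MNA_eq_max_separated asc_set_identity max_separated_atLeastLessThan by (cases n) auto
  moreover have "MND (block_swap 0 0 n) = 0"
    unfolding MND_eq_max_separated des_set_identity max_separated_empty ..
  ultimately show ?thesis
    unfolding stat_weight_def asc_def des_def asc_set_identity des_set_identity by simp
qed

lemma stat_weight_block_swap:
  assumes "1 \<le> a" "1 \<le> b" "a + b \<le> n"
  shows "stat_weight p q y z (block_swap a b n) = p ^ (n - 2) * q * y ^ (b div 2 + (n - b) div 2) * z"
proof -
  have "asc (block_swap a b n) = n - 2"
    unfolding asc_def asc_set_block_swap[OF assms] using assms by (subst card_Un_disjoint) auto
  moreover have "des (block_swap a b n) = 1"
    unfolding des_def des_set_block_swap[OF assms] by simp
  moreover have "MNA (block_swap a b n) = b div 2 + (n - b) div 2"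
    unfolding MNA_eq_max_separated asc_set_block_swap[OF assms] using assms
    by (subst max_separated_Un) (auto simp: max_separated_atLeastLessThan)
  moreover have "MND (block_swap a b n) = 1"
    unfolding MND_eq_max_separated des_set_block_swap[OF assms] max_separated_singleton ..
  ultimately show ?thesis
    unfolding stat_weight_def by simp
qed

lemma avoiders_132_321_eq:
  "perms_avoiding2 n [1,3,2] [3,2,1] =
     insert (block_swap 0 0 n) ((\<lambda>(b, a). block_swap a b n) ` (SIGMA b:{1..<n}. {1..n-b}))"
  (is "_ = insert _ (?swap ` ?S)")
proof
  show "perms_avoiding2 n [1,3,2] [3,2,1] \<subseteq> insert (block_swap 0 0 n) (?swap ` ?S)"
  proof
    fix \<pi> assume "\<pi> \<in> perms_avoiding2 n [1,3,2] [3,2,1]"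
    then have "\<pi> \<in> perms n" "avoids \<pi> [1,3,2]" "avoids \<pi> [3,2,1]"
      unfolding perms_avoiding2_def by auto
    then show "\<pi> \<in> insert (block_swap 0 0 n) (?swap ` ?S)"
    proof (cases rule: avoider_132_321_cases)
      case (2 a b)
      then have "(b, a) \<in> ?S" by auto
      with 2 show ?thesis by force
    qed simp
  qed
next
  have "block_swap a b n \<in> perms_avoiding2 n [1,3,2] [3,2,1]" if "a + b \<le> n" for a b
    using that block_swap_in_perms block_swap_avoids unfolding perms_avoiding2_def by blast
  then show "insert (block_swap 0 0 n) (?swap ` ?S) \<subseteq> perms_avoiding2 n [1,3,2] [3,2,1]"
    by auto
qed

lemma inj_on_block_swap: "inj_on (\<lambda>(b, a). block_swap a b n) (SIGMA b:{1..<n}. {1..n-b})"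
proof (rule inj_onI, clarify)
  fix a b a' b'
  assume "b \<in> {1..<n}" "a \<in> {1..n-b}" "b' \<in> {1..<n}" "a' \<in> {1..n-b'}"
  then have ab: "1 \<le> a" "1 \<le> b" "a + b \<le> n" and ab': "1 \<le> a'" "1 \<le> b'" "a' + b' \<le> n"
    by auto
  assume eq: "block_swap a b n = block_swap a' b' n"
  then have "{b - 1} = {b' - 1}"
    using des_set_block_swap[OF ab] des_set_block_swap[OF ab'] by simp
  then have "b = b'"
    using ab ab' by auto
  moreover have "a + 1 = a' + 1"
  proof -
    have "a + 1 = block_swap a b n ! 0"
      using ab by (simp add: nth_block_swap)
    also have "\<dots> = block_swap a' b' n ! 0"
      by (simp only: eq)
    also have "\<dots> = a' + 1"
      using ab' by (simp add: nth_block_swap)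
    finally show ?thesis .
  qed
  ultimately show "b = b' \<and> a = a'"
    by simp
qed

definition one_descent_sum :: "'a::comm_semiring_1 \<Rightarrow> nat \<Rightarrow> 'a" where
  "one_descent_sum y n = (\<Sum>b = 1..<n. of_nat (n - b) * y ^ (b div 2 + (n - b) div 2))"

lemma sum_stat_weight_avoiders:
  "(\<Sum>\<pi>\<in>perms_avoiding2 n [1,3,2] [3,2,1]. stat_weight p q y z \<pi>) =
     p ^ (n - 1) * y ^ (n div 2) + p ^ (n - 2) * q * z * one_descent_sum y n"
proof -
  define S where "S = (SIGMA b:{1..<n}. {1..n-b})"
  define swap where "swap = (\<lambda>(b, a). block_swap a b n)"
  define w where "w = stat_weight p q y z"
  have "block_swap 0 0 n \<notin> swap ` S"
  proof
    assume "block_swap 0 0 n \<in> swap ` S"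
    then obtain a b where ab: "1 \<le> a" "1 \<le> b" "a + b \<le> n"
      and "block_swap 0 0 n = block_swap a b n"
      unfolding swap_def S_def by auto
    then have "des_set (block_swap 0 0 n) = {b - 1}"
      using des_set_block_swap[OF ab] by simp
    then show False
      unfolding des_set_identity by simp
  qed
  moreover have "finite (swap ` S)"
    unfolding S_def by simp
  ultimately have "sum w (perms_avoiding2 n [1,3,2] [3,2,1]) = w (block_swap 0 0 n) + sum w (swap ` S)"
    unfolding avoiders_132_321_eq S_def[symmetric] swap_def[symmetric] by simp
  also have "sum w (swap ` S) = (\<Sum>(b, a)\<in>S. w (block_swap a b n))"
    using sum.reindex[OF inj_on_block_swap[of n], of w]
    unfolding S_def swap_def by (simp add: case_prod_unfold)
  also have "\<dots> = (\<Sum>b = 1..<n. \<Sum>a = 1..n-b. p ^ (n - 2) * q * y ^ (b div 2 + (n - b) div 2) * z)"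
    unfolding S_def sum.Sigma[symmetric, OF finite_atLeastLessThan ballI[OF finite_atLeastAtMost]]
    by (intro sum.cong refl) (simp add: w_def, subst stat_weight_block_swap, auto)
  also have "\<dots> = p ^ (n - 2) * q * z * one_descent_sum y n"
    unfolding one_descent_sum_def sum_distrib_left by (intro sum.cong refl) (simp add: ac_simps)
  finally show ?thesis
    unfolding w_def stat_weight_identity .
qed

lemma one_descent_sum_add_2:
  "one_descent_sum y (n + 2) =
     of_nat (n + 1) * y ^ ((n + 1) div 2) + y * (of_nat n * y ^ (n div 2) + one_descent_sum y n)"
proof -
  define t where "t k b = of_nat (k - b) * y ^ (b div 2 + (k - b) div 2)" for k b
  have sum_t: "one_descent_sum y k = sum (t k) {1..<k}" for k
    unfolding one_descent_sum_def t_def ..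
  have "sum (t (n + 2)) {1..<n + 2} = t (n + 2) 1 + sum (t (n + 2)) {0 + 2..<n + 2}"
    by (subst sum.atLeast_Suc_lessThan) (simp_all add: numeral_2_eq_2 del: sum.op_ivl_Suc)
  also have "sum (t (n + 2)) {0 + 2..<n + 2} = (\<Sum>c = 0..<n. t (n + 2) (c + 2))"
    by (rule sum.shift_bounds_nat_ivl)
  also have "\<dots> = y * sum (t n) {0..<n}"
    unfolding sum_distrib_left by (intro sum.cong refl) (simp add: t_def algebra_simps)
  also have "sum (t n) {0..<n} = t n 0 + sum (t n) {1..<n}"
    by (cases "n = 0") (simp_all add: sum.atLeast_Suc_lessThan t_def)
  finally show ?thesis
    unfolding sum_t by (simp add: t_def)
qed

lemma one_descent_sum_closed:
  "one_descent_sum y (2 * m + 1) = of_nat (m * (2 * m + 1)) * y ^ m \<and>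
   one_descent_sum y (2 * m + 2) = of_nat (m * (m + 1)) * y ^ (m + 1) + of_nat ((m + 1)^2) * y ^ m"
proof (induction m)
  case 0
  show ?case
    by (simp add: one_descent_sum_def numeral_2_eq_2)
next
  case (Suc m)
  have odd: "2 * Suc m + 1 = (2 * m + 1) + 2" and even: "2 * Suc m + 2 = (2 * m + 2) + 2"
    by simp_all
  show ?case
    unfolding odd even one_descent_sum_add_2[of y "2 * m + 1"] one_descent_sum_add_2[of y "2 * m + 2"]
      conjunct1[OF Suc.IH] conjunct2[OF Suc.IH]
    by (simp add: algebra_simps power2_eq_square mult_2 mult_2_right)
qed

text \<open>For n \<le> 1 the truncated exponent n - 2 is harmless since one_descent_sum vanishes;
  n = 0 gives the weight 1 of the empty permutation.\<close>

definition coeff_132_321 :: "'a::comm_semiring_1 \<Rightarrow> 'a \<Rightarrow> 'a \<Rightarrow> 'a \<Rightarrow> nat \<Rightarrow> 'a" where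
  "coeff_132_321 p q y z n = p ^ (n - 1) * y ^ (n div 2) + p ^ (n - 2) * q * z * one_descent_sum y n"

lemma coeff_132_321_even:
  fixes p q y z :: "'a::idom"
  shows "coeff_132_321 p q y z (2 * j + 2) =
     (p^2 * y) ^ j * (p * y + q * z * (of_nat (j * (j + 1)) * y + of_nat ((j + 1)^2)))"
proof -
  have "coeff_132_321 p q y z (2 * j + 2) =
      p ^ (2 * j + 1) * y ^ (j + 1) +
      p ^ (2 * j) * q * z * (of_nat (j * (j + 1)) * y ^ (j + 1) + of_nat ((j + 1)^2) * y ^ j)"
    unfolding coeff_132_321_def conjunct2[OF one_descent_sum_closed] by simp
  also have "\<dots> = (p^2 * y) ^ j * (p * y + q * z * (of_nat (j * (j + 1)) * y + of_nat ((j + 1)^2)))"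
    by (simp only: power_add power_mult_distrib power_mult power_one_right) algebra
  finally show ?thesis .
qed

lemma coeff_132_321_odd:
  fixes p q y z :: "'a::idom"
  shows "coeff_132_321 p q y z (2 * j + 3) =
     (p^2 * y) ^ j * (p^2 * y + p * y * q * z * of_nat ((j + 1) * (2 * j + 3)))"
proof -
  have "coeff_132_321 p q y z (2 * j + 3) = coeff_132_321 p q y z (2 * (j + 1) + 1)"
    by (rule arg_cong[where f = "coeff_132_321 p q y z"]) simp
  also have "\<dots> = p ^ (2 * j + 2) * y ^ (j + 1) +
      p ^ (2 * j + 1) * q * z * (of_nat ((j + 1) * (2 * j + 3)) * y ^ (j + 1))"
    unfolding coeff_132_321_def conjunct1[OF one_descent_sum_closed] by (simp add: algebra_simps)
  also have "\<dots> = (p^2 * y) ^ j * (p^2 * y + p * y * q * z * of_nat ((j + 1) * (2 * j + 3)))"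
    by (simp only: power_add power_mult_distrib power_mult power_one_right) algebra
  finally show ?thesis .
qed

lemma geometric_times_quadratic_recurrence:
  fixes c a b d :: "'a::idom"
  assumes "\<And>j. f j = c ^ j * (a + b * of_nat j + d * of_nat j ^ 2)"
  shows "f (k + 3) - 3 * c * f (k + 2) + 3 * c^2 * f (k + 1) - c^3 * f k = 0"
  unfolding assms by (simp only: power_add of_nat_add of_nat_numeral of_nat_1) algebra

lemma coeff_132_321_recurrence:
  fixes p q y z :: "'a::idom"
  assumes "2 \<le> m"
  defines "c \<equiv> p^2 * y"
  shows "coeff_132_321 p q y z (m + 6) - 3 * c * coeff_132_321 p q y z (m + 4)
    + 3 * c^2 * coeff_132_321 p q y z (m + 2) - c^3 * coeff_132_321 p q y z m = 0"
proof -
  have "\<exists>k. m = 2 * k + 2 \<or> m = 2 * k + 3"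
    using assms(1) by presburger
  then obtain k where "m = 2 * k + 2 \<or> m = 2 * k + 3" ..
  then show ?thesis
  proof
    assume m: "m = 2 * k + 2"
    define f where "f j = coeff_132_321 p q y z (2 * j + 2)" for j
    have "f j = c ^ j * (p * y + q * z + q * z * (y + 2) * of_nat j + q * z * (y + 1) * of_nat j ^ 2)"
      for j unfolding f_def coeff_132_321_even c_def
      by (simp only: of_nat_mult of_nat_add of_nat_power of_nat_1) algebra
    then have "f (k + 3) - 3 * c * f (k + 2) + 3 * c^2 * f (k + 1) - c^3 * f k = 0"
      by (rule geometric_times_quadratic_recurrence)
    moreover have "2 * (k + 3) + 2 = m + 6" "2 * (k + 2) + 2 = m + 4" "2 * (k + 1) + 2 = m + 2"
      using m by simp_all
    ultimately show ?thesis
      unfolding f_def m[symmetric] by (simp only:)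
  next
    assume m: "m = 2 * k + 3"
    define f where "f j = coeff_132_321 p q y z (2 * j + 3)" for j
    have "f j = c ^ j * (c + 3 * p * y * q * z + 5 * p * y * q * z * of_nat j
        + 2 * p * y * q * z * of_nat j ^ 2)"
      for j unfolding f_def coeff_132_321_odd c_def
      by (simp only: of_nat_mult of_nat_add of_nat_power of_nat_1 of_nat_numeral) algebra
    then have "f (k + 3) - 3 * c * f (k + 2) + 3 * c^2 * f (k + 1) - c^3 * f k = 0"
      by (rule geometric_times_quadratic_recurrence)
    moreover have "2 * (k + 3) + 3 = m + 6" "2 * (k + 2) + 3 = m + 4" "2 * (k + 1) + 3 = m + 2"
      using m by simp_all
    ultimately show ?thesis
      unfolding f_def m[symmetric] by (simp only:)
  qed
qed

section \<open>The generating function\<close>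

lemma fps_nth_times_cube:
  fixes F :: "'a::idom fps"
  shows "fps_nth (F * (1 - fps_const c * fps_X^2)^3) n =
    fps_nth F n - 3 * c * (if n < 2 then 0 else fps_nth F (n - 2))
      + 3 * c^2 * (if n < 4 then 0 else fps_nth F (n - 4))
      - c^3 * (if n < 6 then 0 else fps_nth F (n - 6))"
proof -
  have "F * (1 - fps_const c * fps_X^2)^3 = F - fps_const (3 * c) * (F * fps_X^2)
      + fps_const (3 * c^2) * (F * fps_X^4) - fps_const (c^3) * (F * fps_X^6)"
    unfolding fps_const_mult[symmetric] fps_const_power[symmetric] fps_numeral_fps_const[symmetric]
    by algebra
  then show ?thesis
    by (simp add: fps_X_power_mult_right_nth)
qed

lemma coeff_132_321_initial:
  fixes p q y z :: "'a::idom"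
  shows "coeff_132_321 p q y z 0 = 1" "coeff_132_321 p q y z 1 = 1"
    "coeff_132_321 p q y z 2 = p * y + q * z"
    "coeff_132_321 p q y z 3 = p^2 * y + 3 * p * y * q * z"
    "coeff_132_321 p q y z 4 = p^2 * y * (p * y + q * z * (2 * y + 4))"
    "coeff_132_321 p q y z 5 = p^2 * y * (p^2 * y + 10 * p * y * q * z)"
    "coeff_132_321 p q y z 6 = (p^2 * y)^2 * (p * y + q * z * (6 * y + 9))"
    "coeff_132_321 p q y z 7 = (p^2 * y)^2 * (p^2 * y + 21 * p * y * q * z)"
proof -
  have idx: "(4::nat) = 2 * 1 + 2" "(5::nat) = 2 * 1 + 3" "(6::nat) = 2 * 2 + 2" "(7::nat) = 2 * 2 + 3"
    by simp_all
  show "coeff_132_321 p q y z 0 = 1" "coeff_132_321 p q y z 1 = 1"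
    by (simp_all add: coeff_132_321_def one_descent_sum_def)
  show "coeff_132_321 p q y z 2 = p * y + q * z"
    using coeff_132_321_even[of p q y z 0] by (simp add: numeral_2_eq_2)
  show "coeff_132_321 p q y z 3 = p^2 * y + 3 * p * y * q * z"
    using coeff_132_321_odd[of p q y z 0] by (simp add: numeral_3_eq_3)
  show "coeff_132_321 p q y z 4 = p^2 * y * (p * y + q * z * (2 * y + 4))"
    "coeff_132_321 p q y z 5 = p^2 * y * (p^2 * y + 10 * p * y * q * z)"
    "coeff_132_321 p q y z 6 = (p^2 * y)^2 * (p * y + q * z * (6 * y + 9))"
    "coeff_132_321 p q y z 7 = (p^2 * y)^2 * (p^2 * y + 21 * p * y * q * z)"
    unfolding idx coeff_132_321_even coeff_132_321_odd by simp_all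
qed

lemma coeff_132_321_times_cube:
  fixes p q y z :: "'a::idom"
  defines "X \<equiv> (fps_X :: 'a fps)"
  shows "Abs_fps (coeff_132_321 p q y z) * (1 - fps_const (p^2*y) * X^2) ^ 3 =
      1 + X + fps_const (p*y) * X^2 - fps_const (3*p^2*y) * X^2
      - fps_const (2*p^2*y) * X^3 - fps_const (2*p^3*y^2) * X^4
      + fps_const (3*p^4*y^2) * X^4 + fps_const (p^4*y^2) * X^5
      + fps_const (p^5*y^3) * X^6 - fps_const (p^6*y^3) * X^6
      + fps_const (q*z) * X^2 + fps_const (3*p*q*y*z) * X^3
      + fps_const (p^2*q*y*z) * X^4 + fps_const (2*p^2*q*y^2*z) * X^4
      + fps_const (p^3*q*y^2*z) * X^5"
  (is "?F * _ = ?A")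
proof (rule fps_ext)
  fix n
  have initial: "\<forall>k \<in> {0, 1, 2, 3, 4, 5, 6, 7}.
      fps_nth (?F * (1 - fps_const (p^2*y) * X^2) ^ 3) k = fps_nth ?A k"
    unfolding X_def fps_nth_times_cube
    by (simp add: coeff_132_321_initial coeff_132_321_initial(2)[unfolded One_nat_def])
      (intro conjI; algebra)
  show "fps_nth (?F * (1 - fps_const (p^2*y) * X^2) ^ 3) n = fps_nth ?A n"
  proof (cases "n \<le> 7")
    case True
    then have "n \<in> {0, 1, 2, 3, 4, 5, 6, 7}"
      by auto
    with initial show ?thesis
      by blast
  next
    case False
    define m where "m = n - 6"
    then have "n = m + 6" "2 \<le> m"
      using False by simp_all
    then show ?thesis
      using coeff_132_321_recurrence[of m p q y z]
      unfolding X_def fps_nth_times_cube by (simp add: add.commute)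
  qed
qed

theorem theorem4:
  fixes p q y z :: real
  defines "X \<equiv> (fps_X :: real fps)"
  defines "A \<equiv> 1 + X + fps_const (p*y) * X^2 - fps_const (3*p^2*y) * X^2
      - fps_const (2*p^2*y) * X^3 - fps_const (2*p^3*y^2) * X^4
      + fps_const (3*p^4*y^2) * X^4 + fps_const (p^4*y^2) * X^5
      + fps_const (p^5*y^3) * X^6 - fps_const (p^6*y^3) * X^6
      + fps_const (q*z) * X^2 + fps_const (3*p*q*y*z) * X^3
      + fps_const (p^2*q*y*z) * X^4 + fps_const (2*p^2*q*y^2*z) * X^4
      + fps_const (p^3*q*y^2*z) * X^5"
  shows "G [1,3,2] [3,2,1] p q y z = A / (1 - fps_const (p^2*y) * X^2) ^ 3"
proof -
  have "G [1,3,2] [3,2,1] p q y z = Abs_fps (coeff_132_321 p q y z)"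
    unfolding G_def coeff_132_321_def sum_stat_weight_avoiders[unfolded stat_weight_def] ..
  moreover have "Abs_fps (coeff_132_321 p q y z) * (1 - fps_const (p^2*y) * X^2) ^ 3 = A"
    unfolding X_def A_def by (rule coeff_132_321_times_cube)
  moreover have "(1 - fps_const (p^2*y) * X^2) ^ 3 \<noteq> 0"
  proof
    assume "(1 - fps_const (p^2*y) * X^2) ^ 3 = 0"
    then have "fps_nth ((1 - fps_const (p^2*y) * X^2) ^ 3) 0 = 0"
      by simp
    then show False
      unfolding X_def by (simp add: fps_nth_power_0)
  qed
  ultimately show ?thesis
    using fps_divide_times_eq by metis
qed

end
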